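(* Let $C\ge 2$ and $D$ be positive integers, and let $\mu_1,\dots,\mu_C\in\mathbb{R}^D$ be unit vectors forming a regular simplex, i.e. $\|\mu_j\|=1$ for all $j$ and $\mu_j^\top\mu_{j'}=-\frac{1}{C-1}$ for all $j\neq j'$. Let $\alpha\in[0,\pi/2]$ and let $A\in\mathbb{R}^{D\times D}$ be a real matrix with $A^\top=-A$ and $A^2=-I$. Put $R=\cos\alpha\, I+\sin\alpha\, A$ and $w_j=R\mu_j$ for $j=1,\dots,C$, and assume $\mu_j^\top w_j=\cos\alpha$ for every $j$. Then for every fixed class $c$ and every $c'\neq c$, $$\mu_c^\top w_{c'}=-\frac{\cos\alpha}{C-1}+\zeta_{c,c'},\qquad \zeta_{c,c'}:=\sin\alpha\;\mu_c^\top A\,\mu_{c'},$$ and the residuals satisfy $\sum_{c'\neq c}\zeta_{c,c'}=0$.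
   Context: Since the $\mu_j$ are unit vectors, they coincide with their normalizations $\hat\mu_j=\mu_j/\|\mu_j\|$; likewise $R$ is orthogonal, so $\hat w_j=w_j$. *)

theory Defs
  imports "HOL-Analysis.Analysis"
begin

end

theory Submission
  imports Defs
begin

text \<open>The vertices of a regular simplex sum to zero: the squared norm of their sum is
  \<open>C + C (C - 1) (-1 / (C - 1)) = 0\<close>. Hence the \<open>\<mu> c'\<close> with \<open>c' \<noteq> c\<close> sum to \<open>- \<mu> c\<close>,
  so the residuals sum to \<open>- sin \<alpha> (\<mu> c \<bullet> A \<mu> c)\<close>, which vanishes because \<open>A\<close> is
  skew-symmetric.\<close>

lemma inner_skew_symmetric_matrix_self:
  fixes A :: "real ^ 'n ^ 'n"
  assumes "transpose A = - A"
  shows "x \<bullet> (A *v x) = 0"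
proof -
  have "x v* A = - (A *v x)"
    using assms matrix_vector_mult_diff_rdistrib[of 0 A x] by (simp flip: transpose_matrix_vector)
  then have "x \<bullet> (A *v x) = - (x \<bullet> (A *v x))"
    by (metis dot_lmul_matrix inner_commute inner_minus_left)
  then show ?thesis by simp
qed

lemma inner_scaleR_id_plus_matrix:
  fixes A :: "real ^ 'n ^ 'n"
  shows "x \<bullet> ((a *\<^sub>R mat 1 + b *\<^sub>R A) *v y) = a * (x \<bullet> y) + b * (x \<bullet> (A *v y))"
  by (simp add: matrix_vector_mult_add_rdistrib scaleR_matrix_vector_assoc[symmetric]
      inner_add_right)

lemma sum_regular_simplex_vertices_eq_0:
  fixes u :: "'i \<Rightarrow> 'a :: real_inner"
  assumes card: "card I \<ge> 2"
    and unit: "\<And>i. i \<in> I \<Longrightarrow> norm (u i) = 1"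
    and simplex: "\<And>i j. i \<in> I \<Longrightarrow> j \<in> I \<Longrightarrow> i \<noteq> j \<Longrightarrow> u i \<bullet> u j = - 1 / (real (card I) - 1)"
  shows "sum u I = 0"
proof -
  have fin: "finite I" and card_minus_one_nonzero: "real (card I) - 1 \<noteq> 0"
    using card by (auto intro: card_ge_0_finite)
  have row_sum: "(\<Sum>j\<in>I. u i \<bullet> u j) = 0" if i: "i \<in> I" for i
  proof -
    have "(\<Sum>j\<in>I. u i \<bullet> u j) = u i \<bullet> u i + (\<Sum>j\<in>I - {i}. u i \<bullet> u j)"
      using fin i by (simp add: sum.remove)
    also have "u i \<bullet> u i = 1"
      using unit[OF i] by (simp add: dot_square_norm)
    also have "(\<Sum>j\<in>I - {i}. u i \<bullet> u j) = (\<Sum>j\<in>I - {i}. - 1 / (real (card I) - 1))"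
      using simplex[OF i] by (intro sum.cong) auto
    also have "\<dots> = - 1"
      using fin i card_minus_one_nonzero card by (simp add: card_Diff_singleton of_nat_diff)
    finally show ?thesis by simp
  qed
  have "sum u I \<bullet> sum u I = (\<Sum>i\<in>I. \<Sum>j\<in>I. u i \<bullet> u j)"
    by (simp add: inner_sum_left inner_sum_right) (rule sum.swap)
  also have "\<dots> = 0"
    using row_sum by simp
  finally show ?thesis by simp
qed

lemma sum_regular_simplex_other_vertices:
  fixes u :: "'i \<Rightarrow> 'a :: real_inner"
  assumes "card I \<ge> 2"
    and "\<And>i. i \<in> I \<Longrightarrow> norm (u i) = 1"
    and "\<And>i j. i \<in> I \<Longrightarrow> j \<in> I \<Longrightarrow> i \<noteq> j \<Longrightarrow> u i \<bullet> u j = - 1 / (real (card I) - 1)"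
    and "c \<in> I"
  shows "(\<Sum>i\<in>I - {c}. u i) = - u c"
proof -
  have "finite I"
    using assms(1) by (auto intro: card_ge_0_finite)
  then have "(\<Sum>i\<in>I - {c}. u i) = sum u I - u c"
    using assms(4) by (simp add: sum_diff1)
  then show ?thesis
    using sum_regular_simplex_vertices_eq_0[OF assms(1-3)] by simp
qed

theorem lemma3:
  fixes C :: nat and \<mu> :: "nat \<Rightarrow> real ^ 'd" and \<alpha> :: real
    and A :: "real ^ 'd ^ 'd"
  assumes hC: "C \<ge> 2"
    and hunit: "\<And>j. j \<in> {1..C} \<Longrightarrow> norm (\<mu> j) = 1"
    and hsimp: "\<And>j j'. j \<in> {1..C} \<Longrightarrow> j' \<in> {1..C} \<Longrightarrow> j \<noteq> j' \<Longrightarrow>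
                 \<mu> j \<bullet> \<mu> j' = - 1 / (real C - 1)"
    and h\<alpha>: "\<alpha> \<in> {0..pi/2}"
    and hskew: "transpose A = - A"
    and hsq: "A ** A = - mat 1"
    and hdiag: "\<And>j. j \<in> {1..C} \<Longrightarrow>
                 \<mu> j \<bullet> ((cos \<alpha> *\<^sub>R mat 1 + sin \<alpha> *\<^sub>R A) *v \<mu> j) = cos \<alpha>"
    and hc: "c \<in> {1..C}"
  shows "(\<forall>c'\<in>{1..C}. c' \<noteq> c \<longrightarrow>
            \<mu> c \<bullet> ((cos \<alpha> *\<^sub>R mat 1 + sin \<alpha> *\<^sub>R A) *v \<mu> c')
              = - cos \<alpha> / (real C - 1) + sin \<alpha> * (\<mu> c \<bullet> (A *v \<mu> c')))
         \<and> (\<Sum>c'\<in>{1..C} - {c}. sin \<alpha> * (\<mu> c \<bullet> (A *v \<mu> c'))) = 0"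
proof
  \<comment> \<open>Both identities hold for every \<open>\<alpha>\<close> and every skew-symmetric \<open>A\<close>; \<open>h\<alpha>\<close>, \<open>hsq\<close>, \<open>hdiag\<close> are unused.\<close>
  show "\<forall>c'\<in>{1..C}. c' \<noteq> c \<longrightarrow>
          \<mu> c \<bullet> ((cos \<alpha> *\<^sub>R mat 1 + sin \<alpha> *\<^sub>R A) *v \<mu> c')
            = - cos \<alpha> / (real C - 1) + sin \<alpha> * (\<mu> c \<bullet> (A *v \<mu> c'))"
    using hsimp[OF hc] by (simp add: inner_scaleR_id_plus_matrix)
  have others: "(\<Sum>c'\<in>{1..C} - {c}. \<mu> c') = - \<mu> c"
    using sum_regular_simplex_other_vertices[of "{1..C}" \<mu> c] hC hunit hsimp hc by simp
  have "(\<Sum>c'\<in>{1..C} - {c}. sin \<alpha> * (\<mu> c \<bullet> (A *v \<mu> c')))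
          = sin \<alpha> * (\<mu> c \<bullet> (A *v (\<Sum>c'\<in>{1..C} - {c}. \<mu> c')))"
    by (simp add: linear_sum[OF matrix_vector_mul_linear] inner_sum_right sum_distrib_left)
  also have "\<dots> = - sin \<alpha> * (\<mu> c \<bullet> (A *v \<mu> c))"
    unfolding others by (simp add: linear_neg[OF matrix_vector_mul_linear])
  also have "\<dots> = 0"
    using inner_skew_symmetric_matrix_self[OF hskew] by simp
  finally show "(\<Sum>c'\<in>{1..C} - {c}. sin \<alpha> * (\<mu> c \<bullet> (A *v \<mu> c'))) = 0" .
qed

end
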